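(* The following two statements are equivalent: (a) (Petersen coloring conjecture) For every bridgeless cubic graph $G$ we have $P \prec G$, where $P$ is the Petersen graph. (b) There exists a sublinear function $f:\mathbb{N}\to\mathbb{N}$ such that every bridgeless cubic graph $G$ (not necessarily connected) admits a proper $5$-edge-coloring $c$ with $|N_G(c)|\le f(|V(G)|)$.
   Context: Graphs are finite, undirected, loopless, and may contain parallel edges. For a vertex $v$ of a graph $G$, $\partial_G(v)$ denotes the set of edges incident to $v$. For cubic graphs $G,H$, an $H$-coloring of $G$ is a map $\phi:E(G)\to E(H)$ such that for every $v\in V(G)$ there is $w\in V(H)$ with $\phi(\partial_G(v))=\partial_H(w)$; we write $H\prec G$ if $G$ has an $H$-coloring. A proper $k$-edge-coloring of $G$ is a map $c:E(G)\to\{1,\dots,k\}$ with adjacent edges receiving different colors. For such $c$ and a vertex $v$, $S_c(v)$ is the set of colors on edges incident to $v$. An edge $uv$ of a cubic graph is poor if $|S_c(u)\cup S_c(v)|=3$, rich if $|S_c(u)\cup S_c(v)|=5$, and abnormal if it is neither poor nor rich. $N_G(c)$ denotes the set of abnormal edges of $G$ with respect to $c$. A function $f:\mathbb{N}\to\mathbb{N}$ is sublinear if $\lim_{n\to\infty} f(n)/n=0$. It may be used that (Jaeger) a cubic graph $G$ satisfies $P\prec G$ iff $G$ admits a proper $5$-edge-coloring with no abnormal edges, and that it suffices to prove the Petersen coloring conjecture for 2-connected cubic graphs. *)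

theory Defs
  imports Complex_Main
begin

text \<open>Parallel edges are allowed (distinct edges may have the same ends).\<close>

definition multigraph :: "'v set \<Rightarrow> 'e set \<Rightarrow> ('e \<Rightarrow> 'v set) \<Rightarrow> bool" where
  "multigraph V E inc \<longleftrightarrow> finite V \<and> finite E \<and>
     (\<forall>e\<in>E. \<exists>u v. u \<noteq> v \<and> u \<in> V \<and> v \<in> V \<and> inc e = {u, v})"

definition incident_edges :: "'e set \<Rightarrow> ('e \<Rightarrow> 'v set) \<Rightarrow> 'v \<Rightarrow> 'e set" where
  "incident_edges E inc v = {e \<in> E. v \<in> inc e}"

definition cubic :: "'v set \<Rightarrow> 'e set \<Rightarrow> ('e \<Rightarrow> 'v set) \<Rightarrow> bool" where
  "cubic V E inc \<longleftrightarrow> multigraph V E inc \<and> (\<forall>v\<in>V. card (incident_edges E inc v) = 3)"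

definition adj_without :: "'e set \<Rightarrow> ('e \<Rightarrow> 'v set) \<Rightarrow> 'e \<Rightarrow> 'v \<Rightarrow> 'v \<Rightarrow> bool" where
  "adj_without E inc e0 u v \<longleftrightarrow> (\<exists>e\<in>E - {e0}. inc e = {u, v})"

definition is_bridge :: "'v set \<Rightarrow> 'e set \<Rightarrow> ('e \<Rightarrow> 'v set) \<Rightarrow> 'e \<Rightarrow> bool" where
  "is_bridge V E inc e \<longleftrightarrow> e \<in> E \<and>
     (\<exists>u v. inc e = {u, v} \<and> \<not> (adj_without E inc e)\<^sup>*\<^sup>* u v)"

definition bridgeless :: "'v set \<Rightarrow> 'e set \<Rightarrow> ('e \<Rightarrow> 'v set) \<Rightarrow> bool" where
  "bridgeless V E inc \<longleftrightarrow> (\<forall>e\<in>E. \<not> is_bridge V E inc e)"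

definition H_coloring ::
  "'w set \<Rightarrow> 'f set \<Rightarrow> ('f \<Rightarrow> 'w set) \<Rightarrow> 'v set \<Rightarrow> 'e set \<Rightarrow> ('e \<Rightarrow> 'v set) \<Rightarrow> ('e \<Rightarrow> 'f) \<Rightarrow> bool" where
  "H_coloring VH EH incH VG EG incG phi \<longleftrightarrow>
     (\<forall>e\<in>EG. phi e \<in> EH) \<and>
     (\<forall>v\<in>VG. \<exists>w\<in>VH. phi ` incident_edges EG incG v = incident_edges EH incH w)"

definition colors_prec ::
  "'w set \<Rightarrow> 'f set \<Rightarrow> ('f \<Rightarrow> 'w set) \<Rightarrow> 'v set \<Rightarrow> 'e set \<Rightarrow> ('e \<Rightarrow> 'v set) \<Rightarrow> bool" where
  "colors_prec VH EH incH VG EG incG \<longleftrightarrow> (\<exists>phi. H_coloring VH EH incH VG EG incG phi)"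

text \<open>The Petersen graph: vertices 0..9, edges 0..14; outer 5-cycle 0-1-2-3-4,
 spokes i -- i+5, inner pentagram 5-7-9-6-8.\<close>
definition petersen_V :: "nat set" where "petersen_V = {0..<10}"
definition petersen_E :: "nat set" where "petersen_E = {0..<15}"
definition petersen_inc :: "nat \<Rightarrow> nat set" where
  "petersen_inc e =
     (if e < 5 then {e, (e + 1) mod 5}
      else if e < 10 then {e - 5, e}
      else {5 + (e - 10), 5 + ((e - 10 + 2) mod 5)})"

definition petersen_colorable :: "'v set \<Rightarrow> 'e set \<Rightarrow> ('e \<Rightarrow> 'v set) \<Rightarrow> bool" where
  "petersen_colorable V E inc \<longleftrightarrow> colors_prec petersen_V petersen_E petersen_inc V E inc"

definition proper_edge_coloring :: "nat \<Rightarrow> 'e set \<Rightarrow> ('e \<Rightarrow> 'v set) \<Rightarrow> ('e \<Rightarrow> nat) \<Rightarrow> bool" where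
  "proper_edge_coloring k E inc c \<longleftrightarrow>
     (\<forall>e\<in>E. c e \<in> {1..k}) \<and>
     (\<forall>e\<in>E. \<forall>e'\<in>E. e \<noteq> e' \<and> inc e \<inter> inc e' \<noteq> {} \<longrightarrow> c e \<noteq> c e')"

definition S_col :: "'e set \<Rightarrow> ('e \<Rightarrow> 'v set) \<Rightarrow> ('e \<Rightarrow> nat) \<Rightarrow> 'v \<Rightarrow> nat set" where
  "S_col E inc c v = c ` incident_edges E inc v"

definition poor_edge :: "'e set \<Rightarrow> ('e \<Rightarrow> 'v set) \<Rightarrow> ('e \<Rightarrow> nat) \<Rightarrow> 'e \<Rightarrow> bool" where
  "poor_edge E inc c e \<longleftrightarrow> (\<exists>u v. inc e = {u, v} \<and> card (S_col E inc c u \<union> S_col E inc c v) = 3)"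

definition rich_edge :: "'e set \<Rightarrow> ('e \<Rightarrow> 'v set) \<Rightarrow> ('e \<Rightarrow> nat) \<Rightarrow> 'e \<Rightarrow> bool" where
  "rich_edge E inc c e \<longleftrightarrow> (\<exists>u v. inc e = {u, v} \<and> card (S_col E inc c u \<union> S_col E inc c v) = 5)"

definition abnormal_edges :: "'e set \<Rightarrow> ('e \<Rightarrow> 'v set) \<Rightarrow> ('e \<Rightarrow> nat) \<Rightarrow> 'e set" where
  "abnormal_edges E inc c = {e \<in> E. \<not> poor_edge E inc c e \<and> \<not> rich_edge E inc c e}"

definition sublinear :: "(nat \<Rightarrow> nat) \<Rightarrow> bool" where
  "sublinear f \<longleftrightarrow> (\<lambda>n. real (f n) / real n) \<longlonglongrightarrow> 0"

end

theory Submission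
  imports Defs "HOL-Library.Nat_Bijection"
begin

(* Jaeger: a cubic graph has a Petersen coloring exactly when it has a normal 5-edge-coloring,
   i.e. one without abnormal edges.  A Petersen coloring pulls back the normal coloring of the
   Petersen graph P.  Conversely, the color sets at the vertices of P are all ten 3-subsets of
   {1,...,5}; send each vertex of G to the vertex of P with the same color set and each edge to
   the edge of its color there, normality of the edge making the two ends agree.
   Hence (a) gives (b) with f = 0.  For the converse, given a bridgeless cubic G on n > 0 vertices,
   sublinearity gives k with f(kn) < k; the disjoint union of k copies of G is bridgeless cubic,
   and a coloring of it with at most f(kn) abnormal edges leaves some copy without abnormal
   edges, which is a normal coloring of G. *)

section \<open>Normal edge colorings\<close>

lemma cubicD:
  assumes "cubic V E inc"
  shows "finite V" "finite E"
    and "e \<in> E \<Longrightarrow> \<exists>a b. a \<noteq> b \<and> a \<in> V \<and> b \<in> V \<and> inc e = {a, b}"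
    and "v \<in> V \<Longrightarrow> card (incident_edges E inc v) = 3"
  using assms unfolding cubic_def multigraph_def by auto

lemma cubic_end_in_vertices: "cubic V E inc \<Longrightarrow> e \<in> E \<Longrightarrow> x \<in> inc e \<Longrightarrow> x \<in> V"
  by (fastforce simp: cubic_def multigraph_def)

lemma finite_incident_edges: "finite E \<Longrightarrow> finite (incident_edges E inc v)"
  unfolding incident_edges_def by simp

lemma proper_edge_coloring_inj_on:
  "proper_edge_coloring k E inc c \<Longrightarrow> inj_on c (incident_edges E inc v)"
  unfolding proper_edge_coloring_def incident_edges_def inj_on_def by blast

lemma S_col_subset: "proper_edge_coloring k E inc c \<Longrightarrow> S_col E inc c v \<subseteq> {1..k}"
  unfolding proper_edge_coloring_def S_col_def incident_edges_def by auto

lemma card_S_col: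
  assumes "cubic V E inc" "proper_edge_coloring k E inc c" "v \<in> V"
  shows "card (S_col E inc c v) = 3"
  using assms cubicD[OF assms(1)] proper_edge_coloring_inj_on[OF assms(2)]
  unfolding S_col_def by (simp add: card_image)

lemma poor_or_rich_edge_iff:
  assumes "inc e = {u, v}"
  shows "poor_edge E inc c e \<or> rich_edge E inc c e \<longleftrightarrow>
           card (S_col E inc c u \<union> S_col E inc c v) \<in> {3, 5}"
  using assms unfolding poor_edge_def rich_edge_def by (auto simp: doubleton_eq_iff Un_commute)

definition normal_coloring :: "'e set \<Rightarrow> ('e \<Rightarrow> 'v set) \<Rightarrow> ('e \<Rightarrow> nat) \<Rightarrow> bool" where
  "normal_coloring E inc c \<longleftrightarrow> proper_edge_coloring 5 E inc c \<and> abnormal_edges E inc c = {}"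

lemma normal_coloringD:
  assumes "normal_coloring E inc c" "e \<in> E" "inc e = {u, v}"
  shows "card (S_col E inc c u \<union> S_col E inc c v) \<in> {3, 5}"
  using assms poor_or_rich_edge_iff[of inc e u v E c]
  unfolding normal_coloring_def abnormal_edges_def by blast

lemma normal_coloringI:
  assumes "proper_edge_coloring 5 E inc c"
    and "\<And>e u v. e \<in> E \<Longrightarrow> inc e = {u, v} \<Longrightarrow> card (S_col E inc c u \<union> S_col E inc c v) \<in> {3, 5}"
    and "\<And>e. e \<in> E \<Longrightarrow> \<exists>u v. inc e = {u, v}"
  shows "normal_coloring E inc c"
proof -
  have "poor_edge E inc c e \<or> rich_edge E inc c e" if e: "e \<in> E" for e
  proof -
    obtain u v where "inc e = {u, v}" using assms(3)[OF e] by blast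
    then show ?thesis using assms(2)[OF e] poor_or_rich_edge_iff[of inc e u v E c] by blast
  qed
  then show ?thesis using assms(1) unfolding normal_coloring_def abnormal_edges_def by blast
qed

lemma normal_coloring_color_sets:
  assumes cub: "cubic V E inc" and nc: "normal_coloring E inc c"
    and e: "e \<in> E" "inc e = {u, v}"
  shows "S_col E inc c u = S_col E inc c v \<or> card (S_col E inc c u \<union> S_col E inc c v) = 5"
proof -
  let ?S = "S_col E inc c"
  have pr: "proper_edge_coloring 5 E inc c" using nc unfolding normal_coloring_def by blast
  have uv: "u \<in> V" "v \<in> V" using cubic_end_in_vertices[OF cub e(1)] e(2) by auto
  have card3: "card (?S u) = 3" "card (?S v) = 3" using card_S_col[OF cub pr] uv by auto
  have "?S u \<union> ?S v \<subseteq> {1..5}" using S_col_subset[OF pr] by blast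
  then have fin: "finite (?S u \<union> ?S v)" by (rule finite_subset) simp
  show ?thesis
  proof (cases "card (?S u \<union> ?S v) = 3")
    case True
    have "?S u = ?S u \<union> ?S v" by (rule card_subset_eq[OF fin]) (use True card3 in auto)
    moreover have "?S v = ?S u \<union> ?S v" by (rule card_subset_eq[OF fin]) (use True card3 in auto)
    ultimately show ?thesis by metis
  next
    case False
    then show ?thesis using normal_coloringD[OF nc e] by simp
  qed
qed

lemma proper_edge_coloring_comp_H_coloring:
  assumes cubH: "cubic VH EH incH" and cubG: "cubic VG EG incG"
    and phi: "H_coloring VH EH incH VG EG incG phi" and pr: "proper_edge_coloring k EH incH c"
  shows "proper_edge_coloring k EG incG (c \<circ> phi)"
  unfolding proper_edge_coloring_def
proof (intro conjI ballI impI)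
  fix e assume "e \<in> EG"
  then show "(c \<circ> phi) e \<in> {1..k}"
    using phi pr unfolding H_coloring_def proper_edge_coloring_def by simp
next
  fix e e' assume ee: "e \<in> EG" "e' \<in> EG" "e \<noteq> e' \<and> incG e \<inter> incG e' \<noteq> {}"
  then obtain v where v: "v \<in> incG e" "v \<in> incG e'" by blast
  then have "v \<in> VG" using cubic_end_in_vertices[OF cubG ee(1)] by blast
  then obtain w where w: "w \<in> VH" "phi ` incident_edges EG incG v = incident_edges EH incH w"
    using phi unfolding H_coloring_def by blast
  have "(c \<circ> phi) ` incident_edges EG incG v = S_col EH incH c w"
    using w(2) unfolding S_col_def by (metis image_comp)
  then have "card ((c \<circ> phi) ` incident_edges EG incG v) = card (incident_edges EG incG v)"
    using card_S_col[OF cubH pr w(1)] cubicD(4)[OF cubG \<open>v \<in> VG\<close>] by simp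
  then have "inj_on (c \<circ> phi) (incident_edges EG incG v)"
    using finite_incident_edges[OF cubicD(2)[OF cubG], of incG v] inj_on_iff_eq_card by blast
  moreover have "e \<in> incident_edges EG incG v" "e' \<in> incident_edges EG incG v"
    using ee v unfolding incident_edges_def by auto
  ultimately show "(c \<circ> phi) e \<noteq> (c \<circ> phi) e'" using ee(3) unfolding inj_on_def by blast
qed

text \<open>Pulling back along an H-coloring preserves the color sets at the vertices, and an edge of G
  either lies over an edge of H or has both ends over the same vertex of H.\<close>
lemma normal_coloring_comp_H_coloring:
  assumes cubH: "cubic VH EH incH" and cubG: "cubic VG EG incG"
    and phi: "H_coloring VH EH incH VG EG incG phi" and nc: "normal_coloring EH incH c"
  shows "normal_coloring EG incG (c \<circ> phi)"
proof -
  have prH: "proper_edge_coloring 5 EH incH c" using nc unfolding normal_coloring_def by blast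
  obtain W where W: "\<And>v. v \<in> VG \<Longrightarrow>
      W v \<in> VH \<and> phi ` incident_edges EG incG v = incident_edges EH incH (W v)"
    using phi unfolding H_coloring_def by metis
  have S: "S_col EG incG (c \<circ> phi) v = S_col EH incH c (W v)" if "v \<in> VG" for v
    using W[OF that] unfolding S_col_def by (metis image_comp)
  show ?thesis
  proof (rule normal_coloringI)
    show "proper_edge_coloring 5 EG incG (c \<circ> phi)"
      by (rule proper_edge_coloring_comp_H_coloring[OF cubH cubG phi prH])
  next
    fix e a b assume e: "e \<in> EG" "incG e = {a, b}"
    have ab: "a \<in> VG" "b \<in> VG" using cubic_end_in_vertices[OF cubG e(1)] e(2) by auto
    show "card (S_col EG incG (c \<circ> phi) a \<union> S_col EG incG (c \<circ> phi) b) \<in> {3, 5}"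
    proof (cases "W a = W b")
      case True
      then show ?thesis using S ab card_S_col[OF cubH prH] W by simp
    next
      case False
      have "e \<in> incident_edges EG incG a" "e \<in> incident_edges EG incG b"
        using e unfolding incident_edges_def by auto
      then have "phi e \<in> incident_edges EH incH (W a)" "phi e \<in> incident_edges EH incH (W b)"
        using W ab by (metis imageI)+
      then have "phi e \<in> EH" "W a \<in> incH (phi e)" "W b \<in> incH (phi e)"
        unfolding incident_edges_def by auto
      moreover obtain x y where "incH (phi e) = {x, y}"
        using cubicD(3)[OF cubH \<open>phi e \<in> EH\<close>] by blast
      ultimately have "incH (phi e) = {W a, W b}" using False by auto
      then show ?thesis using normal_coloringD[OF nc \<open>phi e \<in> EH\<close>] S ab by simp
    qed
  next
    fix e assume "e \<in> EG"
    then show "\<exists>u v. incG e = {u, v}" using cubicD(3)[OF cubG] by blast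
  qed
qed

section \<open>The Petersen graph\<close>

definition petersen_ends :: "nat set list" where
  "petersen_ends = [{0,1}, {1,2}, {2,3}, {3,4}, {4,0}, {0,5}, {1,6}, {2,7}, {3,8}, {4,9},
     {5,7}, {6,8}, {7,9}, {8,5}, {9,6}]"

definition petersen_color :: "nat \<Rightarrow> nat" where
  "petersen_color e = [5, 2, 4, 1, 3, 4, 1, 3, 5, 2, 1, 3, 5, 2, 4] ! e"

text \<open>The Kneser labeling of the Petersen graph by 2-subsets of {1..5}: adjacent vertices carry
  disjoint labels, and the color set of \<^const>\<open>petersen_color\<close> at a vertex is the complement of
  its label.\<close>
definition petersen_label :: "nat \<Rightarrow> nat set" where
  "petersen_label w = [{1,2}, {3,4}, {1,5}, {2,3}, {4,5}, {3,5}, {2,5}, {2,4}, {1,4}, {1,3}] ! w"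

definition petersen_colors :: "nat \<Rightarrow> nat set" where
  "petersen_colors w = {1..5} - petersen_label w"

definition petersen_star :: "nat \<Rightarrow> nat set" where
  "petersen_star w = set (filter (\<lambda>e. w \<in> petersen_ends ! e) [0..<15])"

definition petersen_edge :: "nat \<Rightarrow> nat \<Rightarrow> nat" where
  "petersen_edge w x = hd (filter (\<lambda>e. w \<in> petersen_ends ! e \<and> petersen_color e = x) [0..<15])"

lemma petersen_inc_eq_ends:
  assumes "e < 15"
  shows "petersen_inc e = petersen_ends ! e"
proof -
  have "\<forall>e\<in>set [0..<15]. petersen_inc e = petersen_ends ! e"
    unfolding petersen_inc_def petersen_ends_def by code_simp
  moreover have "e \<in> set [0..<15]" using assms by simp
  ultimately show ?thesis by blast
qed

lemma petersen_ends_doubleton: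
  assumes "e < 15"
  shows "\<exists>a b. a \<noteq> b \<and> a < 10 \<and> b < 10 \<and> petersen_ends ! e = {a, b}"
proof -
  have "\<forall>e\<in>set [0..<15]. card (petersen_ends ! e) = 2 \<and> petersen_ends ! e \<subseteq> {..<10}"
    unfolding petersen_ends_def by code_simp
  moreover have "e \<in> set [0..<15]" using assms by simp
  ultimately have "card (petersen_ends ! e) = 2" "petersen_ends ! e \<subseteq> {..<10}" by blast+
  then show ?thesis unfolding card_2_iff by blast
qed

lemma incident_edges_petersen: "incident_edges petersen_E petersen_inc w = petersen_star w"
  unfolding incident_edges_def petersen_E_def petersen_star_def
  using petersen_inc_eq_ends by auto

lemma petersen_star_colors:
  assumes "w < 10"
  shows "card (petersen_star w) = 3" "card (petersen_colors w) = 3"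
    and "petersen_color ` petersen_star w = petersen_colors w"
    and "petersen_star w = petersen_edge w ` petersen_colors w"
proof -
  have "\<forall>w\<in>set [0..<10]. card (petersen_star w) = 3 \<and> card (petersen_colors w) = 3 \<and>
      petersen_color ` petersen_star w = petersen_colors w \<and>
      petersen_star w = petersen_edge w ` petersen_colors w"
    unfolding petersen_colors_def petersen_star_def petersen_edge_def petersen_color_def
      petersen_ends_def petersen_label_def
    by code_simp
  moreover have "w \<in> set [0..<10]" using assms by simp
  ultimately show "card (petersen_star w) = 3" "card (petersen_colors w) = 3"
    "petersen_color ` petersen_star w = petersen_colors w"
    "petersen_star w = petersen_edge w ` petersen_colors w"
    by blast+
qed

lemma petersen_colors_adjacent:
  assumes "e < 15" "w \<in> petersen_ends ! e" "w' \<in> petersen_ends ! e"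
  shows "card (petersen_colors w \<union> petersen_colors w') \<in> {3, 5}"
proof -
  have "\<forall>e\<in>set [0..<15]. \<forall>w\<in>petersen_ends ! e. \<forall>w'\<in>petersen_ends ! e.
      card (petersen_colors w \<union> petersen_colors w') \<in> {3, 5}"
    unfolding petersen_colors_def petersen_ends_def petersen_label_def by code_simp
  moreover have "e \<in> set [0..<15]" using assms(1) by simp
  ultimately show ?thesis using assms(2,3) by blast
qed

lemma petersen_colors_surj:
  assumes "T \<subseteq> {1..5}" "card T = 3"
  shows "\<exists>w<10. petersen_colors w = T"
proof -
  have "\<forall>T\<in>Pow {1..5}. card T = 3 \<longrightarrow> (\<exists>w\<in>set [0..<10]. petersen_colors w = T)"
    unfolding petersen_colors_def petersen_label_def by code_simp
  then obtain w where "w \<in> set [0..<10]" "petersen_colors w = T" using assms by blast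
  then show ?thesis by auto
qed

lemma petersen_edge_rich:
  assumes "w < 10" "w' < 10" "card (petersen_colors w \<union> petersen_colors w') = 5"
    and "x \<in> petersen_colors w" "x \<in> petersen_colors w'"
  shows "petersen_edge w x = petersen_edge w' x"
proof -
  have "\<forall>w\<in>set [0..<10]. \<forall>w'\<in>set [0..<10].
      card (petersen_colors w \<union> petersen_colors w') = 5 \<longrightarrow>
      (\<forall>x\<in>petersen_colors w \<inter> petersen_colors w'. petersen_edge w x = petersen_edge w' x)"
    unfolding petersen_colors_def petersen_edge_def petersen_color_def petersen_ends_def
      petersen_label_def
    by code_simp
  moreover have "w \<in> set [0..<10]" "w' \<in> set [0..<10]" using assms(1,2) by simp_all
  ultimately show ?thesis using assms(3-5) by blast
qed

lemma petersen_color_range: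
  assumes "e < 15"
  shows "petersen_color e \<in> {1..5}"
proof -
  have "\<forall>e\<in>set [0..<15]. petersen_color e \<in> {1..5}"
    unfolding petersen_color_def by code_simp
  moreover have "e \<in> set [0..<15]" using assms by simp
  ultimately show ?thesis by blast
qed

lemma cubic_petersen: "cubic petersen_V petersen_E petersen_inc"
  unfolding cubic_def multigraph_def incident_edges_petersen
  using petersen_ends_doubleton petersen_inc_eq_ends petersen_star_colors(1)
  by (auto simp: petersen_V_def petersen_E_def)

lemma S_col_petersen:
  "w < 10 \<Longrightarrow> S_col petersen_E petersen_inc petersen_color w = petersen_colors w"
  unfolding S_col_def incident_edges_petersen using petersen_star_colors(3) .

lemma normal_coloring_petersen: "normal_coloring petersen_E petersen_inc petersen_color"
proof (rule normal_coloringI)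
  show "proper_edge_coloring 5 petersen_E petersen_inc petersen_color"
    unfolding proper_edge_coloring_def
  proof (intro conjI ballI impI)
    fix e assume "e \<in> petersen_E"
    then show "petersen_color e \<in> {1..5}"
      using petersen_color_range by (simp add: petersen_E_def)
  next
    fix e e' assume ee: "e \<in> petersen_E" "e' \<in> petersen_E"
      "e \<noteq> e' \<and> petersen_inc e \<inter> petersen_inc e' \<noteq> {}"
    then obtain w where w: "w \<in> petersen_inc e" "w \<in> petersen_inc e'" by blast
    then have "w < 10" "e \<in> petersen_star w" "e' \<in> petersen_star w"
      using ee cubic_end_in_vertices[OF cubic_petersen] incident_edges_petersen[of w]
      by (auto simp: petersen_V_def incident_edges_def)
    moreover have "inj_on petersen_color (petersen_star w)"
      using petersen_star_colors(1-3)[OF \<open>w < 10\<close>]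
      by (intro eq_card_imp_inj_on) (simp_all add: petersen_star_def)
    ultimately show "petersen_color e \<noteq> petersen_color e'"
      using ee(3) unfolding inj_on_def by blast
  qed
next
  fix e u v assume e: "e \<in> petersen_E" "petersen_inc e = {u, v}"
  then have uv: "u < 10" "v < 10"
    using cubic_end_in_vertices[OF cubic_petersen] by (auto simp: petersen_V_def)
  have "e < 15" using e(1) by (simp add: petersen_E_def)
  then have "card (petersen_colors u \<union> petersen_colors v) \<in> {3, 5}"
    using petersen_colors_adjacent[of e u v] petersen_inc_eq_ends e(2) by simp
  then show "card (S_col petersen_E petersen_inc petersen_color u \<union>
      S_col petersen_E petersen_inc petersen_color v) \<in> {3, 5}"
    using S_col_petersen uv by simp
next
  fix e assume "e \<in> petersen_E"
  then show "\<exists>u v. petersen_inc e = {u, v}"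
    using cubicD(3)[OF cubic_petersen] by blast
qed

section \<open>Jaeger's characterization of Petersen colorings\<close>

lemma normal_coloring_if_petersen_colorable:
  assumes "cubic V E inc" "petersen_colorable V E inc"
  shows "\<exists>c. normal_coloring E inc c"
proof -
  obtain phi where "H_coloring petersen_V petersen_E petersen_inc V E inc phi"
    using assms(2) unfolding petersen_colorable_def colors_prec_def by blast
  then show ?thesis
    using normal_coloring_comp_H_coloring[OF cubic_petersen assms(1) _ normal_coloring_petersen]
    by blast
qed

definition petersen_vertex :: "nat set \<Rightarrow> nat" where
  "petersen_vertex T = (SOME w. w < 10 \<and> petersen_colors w = T)"

definition petersen_map :: "'e set \<Rightarrow> ('e \<Rightarrow> 'v set) \<Rightarrow> ('e \<Rightarrow> nat) \<Rightarrow> 'e \<Rightarrow> nat" where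
  "petersen_map E inc c e =
     petersen_edge (petersen_vertex (S_col E inc c (SOME v. v \<in> inc e))) (c e)"

lemma petersen_vertex_correct:
  assumes "T \<subseteq> {1..5}" "card T = 3"
  shows "petersen_vertex T < 10" "petersen_colors (petersen_vertex T) = T"
proof -
  have "petersen_vertex T < 10 \<and> petersen_colors (petersen_vertex T) = T"
    unfolding petersen_vertex_def
    by (rule someI_ex) (use petersen_colors_surj[OF assms] in blast)
  then show "petersen_vertex T < 10" "petersen_colors (petersen_vertex T) = T" by auto
qed

lemma petersen_vertex_S_col:
  assumes "cubic V E inc" "normal_coloring E inc c" "v \<in> V"
  shows "petersen_vertex (S_col E inc c v) < 10"
    and "petersen_colors (petersen_vertex (S_col E inc c v)) = S_col E inc c v"
  using assms petersen_vertex_correct S_col_subset card_S_col unfolding normal_coloring_def by metis+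

lemma petersen_map_at_end:
  assumes cub: "cubic V E inc" and nc: "normal_coloring E inc c" and e: "e \<in> E" "v \<in> inc e"
  shows "petersen_map E inc c e = petersen_edge (petersen_vertex (S_col E inc c v)) (c e)"
proof -
  let ?S = "S_col E inc c" and ?P = "\<lambda>u. petersen_vertex (S_col E inc c u)"
  define u where "u = (SOME u. u \<in> inc e)"
  have u: "u \<in> inc e" unfolding u_def by (rule someI) (rule e(2))
  have uv: "u \<in> V" "v \<in> V" using cubic_end_in_vertices[OF cub e(1)] u e(2) by auto
  have "petersen_edge (?P u) (c e) = petersen_edge (?P v) (c e)"
  proof (cases "u = v")
    case False
    then have "inc e = {u, v}" using cubicD(3)[OF cub e(1)] u e(2) by auto
    then consider "?S u = ?S v" | "card (?S u \<union> ?S v) = 5"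
      using normal_coloring_color_sets[OF cub nc e(1)] by blast
    then show ?thesis
    proof cases
      case 2
      have "c e \<in> ?S u" "c e \<in> ?S v"
        using e u unfolding S_col_def incident_edges_def by auto
      then show ?thesis
        using petersen_edge_rich 2 petersen_vertex_S_col[OF cub nc] uv by simp
    qed simp
  qed simp
  then show ?thesis unfolding petersen_map_def u_def .
qed

lemma H_coloring_petersen_map:
  assumes cub: "cubic V E inc" and nc: "normal_coloring E inc c"
  shows "H_coloring petersen_V petersen_E petersen_inc V E inc (petersen_map E inc c)"
proof -
  let ?phi = "petersen_map E inc c" and ?P = "\<lambda>v. petersen_vertex (S_col E inc c v)"
  have star: "?phi ` incident_edges E inc v = incident_edges petersen_E petersen_inc (?P v)"
    if "v \<in> V" for v
  proof -
    have "?phi ` incident_edges E inc v = petersen_edge (?P v) ` c ` incident_edges E inc v"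
      unfolding image_image
      by (rule image_cong) (auto simp: incident_edges_def petersen_map_at_end[OF cub nc])
    also have "\<dots> = petersen_star (?P v)"
      using petersen_star_colors(4) petersen_vertex_S_col[OF cub nc that]
      by (simp add: S_col_def)
    finally show ?thesis by (simp add: incident_edges_petersen)
  qed
  show ?thesis
    unfolding H_coloring_def
  proof (intro conjI ballI)
    fix e assume e: "e \<in> E"
    then obtain v where v: "v \<in> inc e" using cubicD(3)[OF cub] by blast
    then have "v \<in> V" "e \<in> incident_edges E inc v"
      using cubic_end_in_vertices[OF cub e] e by (auto simp: incident_edges_def)
    then have "?phi e \<in> incident_edges petersen_E petersen_inc (?P v)" using star by (metis imageI)
    then show "?phi e \<in> petersen_E" by (simp add: incident_edges_def)
  next
    fix v assume "v \<in> V"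
    then show "\<exists>w\<in>petersen_V. ?phi ` incident_edges E inc v = incident_edges petersen_E petersen_inc w"
      using star petersen_vertex_S_col(1)[OF cub nc] by (auto simp: petersen_V_def)
  qed
qed

theorem petersen_colorable_iff_normal_coloring:
  "cubic V E inc \<Longrightarrow> petersen_colorable V E inc \<longleftrightarrow> (\<exists>c. normal_coloring E inc c)"
  using normal_coloring_if_petersen_colorable H_coloring_petersen_map
  unfolding petersen_colorable_def colors_prec_def by blast

section \<open>Disjoint copies and sublinear bounds\<close>

text \<open>The disjoint union of k copies is kept inside \<^typ>\<open>nat\<close>, via the pairing
  \<^const>\<open>prod_encode\<close>, because the hypothesis only speaks about graphs on \<^typ>\<open>nat\<close>.\<close>
definition copy :: "nat \<Rightarrow> nat \<Rightarrow> nat" where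
  "copy i x = prod_encode (i, x)"

definition copies :: "nat \<Rightarrow> nat set \<Rightarrow> nat set" where
  "copies k X = (\<lambda>(i, x). copy i x) ` ({..<k} \<times> X)"

definition copies_inc :: "(nat \<Rightarrow> nat set) \<Rightarrow> nat \<Rightarrow> nat set" where
  "copies_inc inc y = copy (fst (prod_decode y)) ` inc (snd (prod_decode y))"

lemma copy_eq_iff [simp]: "copy i x = copy j y \<longleftrightarrow> i = j \<and> x = y"
  unfolding copy_def by (metis prod_encode_eq prod.inject)

lemma inj_copy: "inj (copy i)"
  by (simp add: inj_def)

lemma copies_inc_copy [simp]: "copies_inc inc (copy i e) = copy i ` inc e"
  unfolding copies_inc_def copy_def by simp

lemma mem_copies: "y \<in> copies k X \<longleftrightarrow> (\<exists>i<k. \<exists>x\<in>X. y = copy i x)"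
  unfolding copies_def by auto

lemma card_copies: "finite X \<Longrightarrow> card (copies k X) = k * card X"
  unfolding copies_def by (subst card_image) (auto simp: inj_on_def card_cartesian_product)

lemma incident_edges_copies:
  "i < k \<Longrightarrow> incident_edges (copies k E) (copies_inc inc) (copy i v) = copy i ` incident_edges E inc v"
  unfolding incident_edges_def mem_copies by auto

lemma copy_image_eq_doubleton:
  assumes "copy i ` A = {u', v'}"
  obtains u v where "A = {u, v}" "u' = copy i u" "v' = copy i v"
proof -
  obtain u v where uv: "u \<in> A" "v \<in> A" "u' = copy i u" "v' = copy i v"
    using assms by (metis imageE insertI1 insertI2)
  then have "copy i ` A = copy i ` {u, v}" using assms by simp
  then have "A = {u, v}" using inj_copy by (metis inj_image_eq_iff)
  then show ?thesis using that uv by blast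
qed

lemma cubic_copies:
  assumes cub: "cubic V E inc"
  shows "cubic (copies k V) (copies k E) (copies_inc inc)"
  unfolding cubic_def multigraph_def
proof (intro conjI ballI)
  show "finite (copies k V)" "finite (copies k E)"
    using cubicD(1,2)[OF cub] unfolding copies_def by auto
next
  fix y assume "y \<in> copies k E"
  then obtain i e where ie: "i < k" "e \<in> E" "y = copy i e" unfolding mem_copies by blast
  obtain a b where ab: "a \<noteq> b" "a \<in> V" "b \<in> V" "inc e = {a, b}" using cubicD(3)[OF cub ie(2)] by blast
  have "copy i a \<noteq> copy i b" "copy i a \<in> copies k V" "copy i b \<in> copies k V"
    "copies_inc inc y = {copy i a, copy i b}"
    using ie ab by (auto simp: mem_copies)
  then show "\<exists>u v. u \<noteq> v \<and> u \<in> copies k V \<and> v \<in> copies k V \<and> copies_inc inc y = {u, v}"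
    by blast
next
  fix y assume "y \<in> copies k V"
  then obtain i v where iv: "i < k" "v \<in> V" "y = copy i v" unfolding mem_copies by blast
  show "card (incident_edges (copies k E) (copies_inc inc) y) = 3"
    using incident_edges_copies[OF iv(1)] iv cubicD(4)[OF cub]
    by (simp add: card_image inj_on_subset[OF inj_copy])
qed

lemma rtranclp_adj_without_copies:
  assumes "(adj_without E inc e)\<^sup>*\<^sup>* a b" "i < k"
  shows "(adj_without (copies k E) (copies_inc inc) (copy i e))\<^sup>*\<^sup>* (copy i a) (copy i b)"
  using assms(1)
proof (induction rule: rtranclp_induct)
  case (step y z)
  then obtain e' where "e' \<in> E - {e}" "inc e' = {y, z}" unfolding adj_without_def by blast
  then have "adj_without (copies k E) (copies_inc inc) (copy i e) (copy i y) (copy i z)"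
    unfolding adj_without_def using assms(2)
    by (intro bexI[of _ "copy i e'"]) (auto simp: mem_copies)
  with step.IH show ?case by (rule rtranclp.rtrancl_into_rtrancl)
qed simp

lemma bridgeless_copies:
  assumes "bridgeless V E inc"
  shows "bridgeless (copies k V) (copies k E) (copies_inc inc)"
  unfolding bridgeless_def
proof (intro ballI notI)
  fix y assume "y \<in> copies k E" and "is_bridge (copies k V) (copies k E) (copies_inc inc) y"
  then obtain i e u' v' where ie: "i < k" "e \<in> E" "y = copy i e"
    and uv': "copy i ` inc e = {u', v'}" "\<not> (adj_without (copies k E) (copies_inc inc) y)\<^sup>*\<^sup>* u' v'"
    unfolding mem_copies is_bridge_def by auto
  obtain u v where uv: "inc e = {u, v}" "u' = copy i u" "v' = copy i v"
    using copy_image_eq_doubleton[OF uv'(1)] by blast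
  have "(adj_without E inc e)\<^sup>*\<^sup>* u v"
    using assms ie(2) uv(1) unfolding bridgeless_def is_bridge_def by blast
  then show False using rtranclp_adj_without_copies[OF _ ie(1)] uv' uv ie(3) by simp
qed

lemma normal_coloring_copy:
  assumes i: "i < k" and pr: "proper_edge_coloring 5 (copies k E) (copies_inc inc) c"
    and no_abnormal: "\<forall>e\<in>E. copy i e \<notin> abnormal_edges (copies k E) (copies_inc inc) c"
  shows "normal_coloring E inc (c \<circ> copy i)"
proof -
  have mem: "e \<in> E \<Longrightarrow> copy i e \<in> copies k E" for e using i by (auto simp: mem_copies)
  then have poor_or_rich: "poor_edge (copies k E) (copies_inc inc) c (copy i e) \<or>
      rich_edge (copies k E) (copies_inc inc) c (copy i e)" if "e \<in> E" for e
    using no_abnormal that unfolding abnormal_edges_def by blast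
  show ?thesis
  proof (rule normal_coloringI)
    show "proper_edge_coloring 5 E inc (c \<circ> copy i)"
      using pr mem unfolding proper_edge_coloring_def
      by (auto simp: image_Int[OF inj_copy, symmetric])
  next
    fix e u v assume e: "e \<in> E" "inc e = {u, v}"
    have "S_col E inc (c \<circ> copy i) x = S_col (copies k E) (copies_inc inc) c (copy i x)" for x
      unfolding S_col_def incident_edges_copies[OF i] by (simp add: image_comp)
    moreover have "copies_inc inc (copy i e) = {copy i u, copy i v}" using e(2) by simp
    ultimately show "card (S_col E inc (c \<circ> copy i) u \<union> S_col E inc (c \<circ> copy i) v) \<in> {3, 5}"
      using poor_or_rich[OF e(1)]
        poor_or_rich_edge_iff[of "copies_inc inc" "copy i e" "copy i u" "copy i v" "copies k E" c]
      by simp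
  next
    fix e assume "e \<in> E"
    then obtain u' v' where "copy i ` inc e = {u', v'}"
      using poor_or_rich[OF \<open>e \<in> E\<close>] unfolding poor_edge_def rich_edge_def by auto
    then show "\<exists>u v. inc e = {u, v}" by (rule copy_image_eq_doubleton) blast
  qed
qed

lemma ex_copy_avoiding:
  assumes "finite A" "card A < k"
  shows "\<exists>i<k. \<forall>e\<in>E. copy i e \<notin> A"
proof (rule ccontr)
  assume "\<not> ?thesis"
  then obtain g where g: "\<And>i. i < k \<Longrightarrow> copy i (g i) \<in> A" by metis
  have "inj_on (\<lambda>i. copy i (g i)) {..<k}" by (simp add: inj_on_def)
  then have "card {..<k} \<le> card A" using g assms(1) by (intro card_inj_on_le) auto
  then show False using assms(2) by simp
qed

lemma sublinear_ex_multiple_less: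
  assumes "sublinear f" "n > 0"
  shows "\<exists>k. f (k * n) < k"
proof -
  have "eventually (\<lambda>m. real (f m) / real m < 1 / real n) sequentially"
    using assms unfolding sublinear_def by (intro order_tendstoD(2)) auto
  then obtain M where M: "\<And>m. m \<ge> M \<Longrightarrow> real (f m) / real m < 1 / real n"
    unfolding eventually_sequentially by blast
  define m where "m = (M + 1) * n"
  have "m \<ge> M" using assms(2) unfolding m_def by (simp add: add_mult_distrib trans_le_add2)
  have "m > 0" using assms(2) by (simp add: m_def)
  then have "real m > 0" by simp
  have "real (f m) < real m * (1 / real n)"
    using M[OF \<open>m \<ge> M\<close>] \<open>real m > 0\<close> by (simp add: divide_less_eq mult.commute)
  also have "\<dots> = real (M + 1)" using assms(2) by (simp add: m_def field_simps)
  finally have "f m < M + 1" by (simp only: of_nat_less_iff)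
  then show ?thesis unfolding m_def by blast
qed

lemma normal_coloring_if_sublinear_abnormal:
  fixes V E :: "nat set" and inc :: "nat \<Rightarrow> nat set"
  assumes f: "sublinear f"
    and hyp: "\<forall>(V::nat set) (E::nat set) (inc::nat \<Rightarrow> nat set).
               cubic V E inc \<and> bridgeless V E inc \<longrightarrow>
               (\<exists>c. proper_edge_coloring 5 E inc c \<and> card (abnormal_edges E inc c) \<le> f (card V))"
    and cub: "cubic V E inc" and bl: "bridgeless V E inc"
  shows "\<exists>c. normal_coloring E inc c"
proof (cases "V = {}")
  case True
  then have "E = {}" using cubicD(3)[OF cub] by blast
  then show ?thesis by (simp add: normal_coloring_def proper_edge_coloring_def abnormal_edges_def)
next
  case False
  then have "card V > 0" using cubicD(1)[OF cub] by (simp add: card_gt_0_iff)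
  then obtain k where k: "f (k * card V) < k" using sublinear_ex_multiple_less[OF f] by blast
  let ?E = "copies k E" and ?inc = "copies_inc inc"
  obtain c where c: "proper_edge_coloring 5 ?E ?inc c"
      "card (abnormal_edges ?E ?inc c) \<le> f (card (copies k V))"
    using hyp cubic_copies[OF cub] bridgeless_copies[OF bl] by meson
  have "finite (abnormal_edges ?E ?inc c)"
    using cubicD(2)[OF cubic_copies[OF cub]] by (simp add: abnormal_edges_def)
  moreover have "card (abnormal_edges ?E ?inc c) < k"
    using c(2) k card_copies[OF cubicD(1)[OF cub]] by simp
  ultimately obtain i where "i < k" "\<forall>e\<in>E. copy i e \<notin> abnormal_edges ?E ?inc c"
    using ex_copy_avoiding[of "abnormal_edges ?E ?inc c" k E] by blast
  then show ?thesis using normal_coloring_copy[OF _ c(1)] by (intro exI)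
qed

theorem mainTheorem1:
  shows "(\<forall>(V::nat set) (E::nat set) (inc::nat \<Rightarrow> nat set).
            cubic V E inc \<and> bridgeless V E inc \<longrightarrow> petersen_colorable V E inc)
         \<longleftrightarrow>
         (\<exists>f::nat \<Rightarrow> nat. sublinear f \<and>
            (\<forall>(V::nat set) (E::nat set) (inc::nat \<Rightarrow> nat set).
               cubic V E inc \<and> bridgeless V E inc \<longrightarrow>
               (\<exists>c. proper_edge_coloring 5 E inc c \<and>
                    card (abnormal_edges E inc c) \<le> f (card V))))"
proof
  assume petersen: "\<forall>(V::nat set) (E::nat set) (inc::nat \<Rightarrow> nat set).
    cubic V E inc \<and> bridgeless V E inc \<longrightarrow> petersen_colorable V E inc"
  show "\<exists>f. sublinear f \<and> (\<forall>(V::nat set) (E::nat set) (inc::nat \<Rightarrow> nat set).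
    cubic V E inc \<and> bridgeless V E inc \<longrightarrow>
      (\<exists>c. proper_edge_coloring 5 E inc c \<and> card (abnormal_edges E inc c) \<le> f (card V)))"
  proof (rule exI[of _ "\<lambda>_. 0"], intro conjI allI impI)
    show "sublinear (\<lambda>_. 0)" unfolding sublinear_def by simp
    fix V E :: "nat set" and inc :: "nat \<Rightarrow> nat set" assume "cubic V E inc \<and> bridgeless V E inc"
    then obtain c where "normal_coloring E inc c"
      using petersen petersen_colorable_iff_normal_coloring by blast
    then show "\<exists>c. proper_edge_coloring 5 E inc c \<and> card (abnormal_edges E inc c) \<le> 0"
      unfolding normal_coloring_def by auto
  qed
next
  assume "\<exists>f. sublinear f \<and> (\<forall>(V::nat set) (E::nat set) (inc::nat \<Rightarrow> nat set).
    cubic V E inc \<and> bridgeless V E inc \<longrightarrow>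
      (\<exists>c. proper_edge_coloring 5 E inc c \<and> card (abnormal_edges E inc c) \<le> f (card V)))"
  then obtain f where f: "sublinear f" and hyp: "\<forall>(V::nat set) (E::nat set) (inc::nat \<Rightarrow> nat set).
    cubic V E inc \<and> bridgeless V E inc \<longrightarrow>
      (\<exists>c. proper_edge_coloring 5 E inc c \<and> card (abnormal_edges E inc c) \<le> f (card V))"
    by blast
  show "\<forall>(V::nat set) (E::nat set) (inc::nat \<Rightarrow> nat set).
    cubic V E inc \<and> bridgeless V E inc \<longrightarrow> petersen_colorable V E inc"
  proof (intro allI impI)
    fix V E :: "nat set" and inc :: "nat \<Rightarrow> nat set" assume "cubic V E inc \<and> bridgeless V E inc"
    then have "\<exists>c. normal_coloring E inc c"
      using normal_coloring_if_sublinear_abnormal[OF f hyp] by blast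
    then show "petersen_colorable V E inc"
      using petersen_colorable_iff_normal_coloring \<open>cubic V E inc \<and> bridgeless V E inc\<close> by blast
  qed
qed

end
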